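(* Let $\varphi,\psi:\mathbb{C}\rightarrow\mathbb{C}^n$ be given by $\varphi(\theta)=Y\exp_{N}(\theta S)c+((1,\theta,\cdots,\theta^{N})\otimes I_n)x$ and $\psi(\theta)=Y\exp_{N}(\theta S)d+((1,\theta,\cdots,\theta^{N})\otimes I_n)z$. Then, for any $N_{\max}\ge N+1$, \[ \langle\varphi,\psi\rangle=\sum_{i=0}^Nz_i^Hx_i+d^HW_{N+1,N_{\max}}c+\varepsilon_{N_{\max}}, \qquad W_{N,M}=\sum_{i=N}^{M}\frac{(S^i)^HY^HY S^i}{(i!)^2}, \] where the error satisfies \[ |\varepsilon_{N_{\max}}|\le\|d\|_2\|Y^HY\|_2\|c\|_2\frac{e^{2\|S\|_2}\|S\|_2^{2(N_{\max}+1)}}{((N_{\max}+1)!)^2}. \]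
   Context: Let $Y\in\mathbb{C}^{n\times p}$, $S\in\mathbb{C}^{p\times p}$, $c,d\in\mathbb{C}^p$, and $x=(x_0^T,\ldots,x_N^T)^T$, $z=(z_0^T,\ldots,z_N^T)^T\in\mathbb{C}^{(N+1)n}$ with blocks $x_i,z_i\in\mathbb{C}^n$. Here $\exp_N(\theta S):=\sum_{i=N+1}^\infty \frac{1}{i!}\theta^iS^i$ denotes the remainder of the truncated Taylor expansion of the matrix exponential (with $\exp_{-1}=\exp$). The scalar product of two such functions is defined as the Euclidean scalar product of their monomial Taylor coefficients, i.e. for $\varphi(\theta)=\sum_j\theta^jx_j$, $\psi(\theta)=\sum_j\theta^jz_j$, $\langle\varphi,\psi\rangle:=\sum_{i=0}^\infty z_i^Hx_i$; for the structured functions above this reads \[ \langle\varphi,\psi\rangle=\sum_{i=0}^Nz_i^Hx_i+\sum_{i=N+1}^{\infty}\frac{d^H(S^i)^HY^HY S^ic}{(i!)^2}. \] *)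

theory Defs
  imports "HOL-Analysis.Analysis"
begin

definition adjm :: "complex^'m^'n \<Rightarrow> complex^'n^'m" where
  "adjm A = (\<chi> i j. cnj (A $ j $ i))"

definition cdot :: "complex^'n \<Rightarrow> complex^'n \<Rightarrow> complex" where
  "cdot y x = (\<Sum>i\<in>UNIV. cnj (y $ i) * x $ i)"

primrec matpow :: "complex^'p^'p \<Rightarrow> nat \<Rightarrow> complex^'p^'p" where
  "matpow S 0 = mat 1"
| "matpow S (Suc k) = S ** matpow S k"

definition mnorm2 :: "complex^'m^'n \<Rightarrow> real" where
  "mnorm2 A = onorm (\<lambda>v. A *v v)"

text \<open>Monomial Taylor coefficients of
  theta \<mapsto> Y exp_N(theta S) c + ((1,theta,...,theta^N) \<otimes> I_n) x:
  the i-th coefficient is x_i for i \<le> N and Y S^i c / i! for i > N.\<close>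
definition struct_coeff ::
  "complex^'p^'n \<Rightarrow> complex^'p^'p \<Rightarrow> complex^'p \<Rightarrow> (nat \<Rightarrow> complex^'n) \<Rightarrow> nat \<Rightarrow> nat \<Rightarrow> complex^'n" where
  "struct_coeff Y S c x N i =
     (if i \<le> N then x i else (1 / fact i) *\<^sub>R (Y *v (matpow S i *v c)))"

text \<open>Scalar product of two functions given by their monomial Taylor coefficient
  sequences: <phi,psi> = sum_i z_i^H x_i.\<close>
definition taylor_inner :: "(nat \<Rightarrow> complex^'n) \<Rightarrow> (nat \<Rightarrow> complex^'n) \<Rightarrow> complex" where
  "taylor_inner phic psic = (\<Sum>i. cdot (psic i) (phic i))"

definition Wmat :: "complex^'p^'n \<Rightarrow> complex^'p^'p \<Rightarrow> nat \<Rightarrow> nat \<Rightarrow> complex^'p^'p" where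
  "Wmat Y S N M = (\<Sum>i=N..M. (1 / (fact i)^2) *\<^sub>R
      (adjm (matpow S i) ** adjm Y ** Y ** matpow S i))"

end

theory Submission
  imports Defs
begin

text \<open>For i > N the i-th Taylor coefficients are Y S^i c / i! and Y S^i d / i!, so the i-th
  summand of the scalar product is d^H (S^i)^H Y^H Y S^i c / (i!)^2: the summands with
  N < i \<le> Nmax make up d^H W c, and each remaining one is bounded by
  \<parallel>d\<parallel> \<parallel>Y^H Y\<parallel> \<parallel>c\<parallel> (\<parallel>S\<parallel>^i / i!)^2.  Since (i+M)! \<ge> i! M!, the tail from M = Nmax + 1
  on is at most (\<parallel>S\<parallel>^M / M!)^2 \<Sum>i (\<parallel>S\<parallel>^i / i!)^2, and the last series is at most
  e^\<parallel>S\<parallel> \<Sum>i \<parallel>S\<parallel>^i / i! = e^(2\<parallel>S\<parallel>) because every term \<parallel>S\<parallel>^i / i! is at most e^\<parallel>S\<parallel>.\<close>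

lemma norm_cdot_le: "cmod (cdot u v) \<le> norm u * norm v"
proof -
  define u' :: "real^'a" where "u' = (\<chi> i. cmod (u $ i))"
  define v' :: "real^'a" where "v' = (\<chi> i. cmod (v $ i))"
  have "cmod (cdot u v) \<le> (\<Sum>i\<in>UNIV. cmod (u $ i) * cmod (v $ i))"
    unfolding cdot_def by (rule order_trans[OF norm_sum]) (simp add: norm_mult)
  also have "\<dots> = inner u' v'" by (simp add: u'_def v'_def inner_vec_def)
  also have "\<dots> \<le> norm u' * norm v'" by (rule norm_cauchy_schwarz)
  also have "norm u' = norm u" by (simp add: u'_def norm_vec_def)
  also have "norm v' = norm v" by (simp add: v'_def norm_vec_def)
  finally show ?thesis .
qed

lemma cdot_adjm_right: "cdot u (adjm B *v v) = cdot (B *v u) v"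
proof -
  have "cdot u (adjm B *v v) = (\<Sum>i\<in>UNIV. \<Sum>j\<in>UNIV. cnj (u $ i) * (cnj (B $ j $ i) * v $ j))"
    unfolding cdot_def adjm_def matrix_vector_mult_def by (simp add: sum_distrib_left)
  also have "\<dots> = (\<Sum>j\<in>UNIV. \<Sum>i\<in>UNIV. cnj (u $ i) * (cnj (B $ j $ i) * v $ j))"
    by (rule sum.swap)
  also have "\<dots> = cdot (B *v u) v"
    unfolding cdot_def matrix_vector_mult_def
    by (simp add: sum_distrib_left sum_distrib_right mult_ac)
  finally show ?thesis .
qed

lemma cdot_mult_vec_mult_vec:
  "cdot (A *v (B *v u)) (A *v (B *v v)) = cdot u ((adjm B ** adjm A ** A ** B) *v v)"
  by (simp add: cdot_adjm_right[symmetric] matrix_vector_mul_assoc[symmetric])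

lemma scaleR_vec_nth_complex: "((r::real) *\<^sub>R (v::complex^'a)) $ i = of_real r * v $ i"
  using scaleR_conv_of_real[of r "v $ i"] by simp

lemma cdot_scaleR_left: "cdot ((r::real) *\<^sub>R u) v = of_real r * cdot u v"
  unfolding cdot_def scaleR_vec_nth_complex by (simp add: sum_distrib_left mult_ac)

lemma cdot_scaleR_right: "cdot u ((r::real) *\<^sub>R v) = of_real r * cdot u v"
  unfolding cdot_def scaleR_vec_nth_complex by (simp add: sum_distrib_left mult_ac)

lemma cdot_sum_right: "cdot u (\<Sum>k\<in>A. f k) = (\<Sum>k\<in>A. cdot u (f k))"
proof -
  have "cdot u (\<Sum>k\<in>A. f k) = (\<Sum>i\<in>UNIV. \<Sum>k\<in>A. cnj (u $ i) * f k $ i)"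
    unfolding cdot_def by (simp add: sum_component sum_distrib_left)
  also have "\<dots> = (\<Sum>k\<in>A. cdot u (f k))"
    unfolding cdot_def by (rule sum.swap)
  finally show ?thesis .
qed

lemma matrix_vector_mult_sum_left:
  "finite A \<Longrightarrow> (\<Sum>k\<in>A. M k) *v v = (\<Sum>k\<in>A. M k *v v)"
  by (induction A rule: finite_induct) (simp_all add: matrix_vector_mult_add_rdistrib)

lemma matrix_vector_mult_scaleR_left:
  "((r::real) *\<^sub>R (A::complex^'a^'b)) *v v = r *\<^sub>R (A *v v)"
  by (simp add: vec_eq_iff matrix_vector_mult_def scaleR_sum_right)

lemma mnorm2_nonneg: "0 \<le> mnorm2 (A::complex^'a^'b)"
  unfolding mnorm2_def by (rule onorm_pos_le) simp

lemma norm_mult_vec_le_mnorm2: "norm (A *v v) \<le> mnorm2 A * norm (v::complex^'a)"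
  unfolding mnorm2_def by (rule onorm) simp

lemma norm_matpow_mult_vec_le: "norm (matpow S i *v v) \<le> mnorm2 S ^ i * norm (v::complex^'a)"
proof (induction i)
  case 0
  then show ?case by simp
next
  case (Suc i)
  have "norm (matpow S (Suc i) *v v) = norm (S *v (matpow S i *v v))"
    by (simp add: matrix_vector_mul_assoc)
  also have "\<dots> \<le> mnorm2 S * norm (matpow S i *v v)" by (rule norm_mult_vec_le_mnorm2)
  also have "\<dots> \<le> mnorm2 S * (mnorm2 S ^ i * norm v)"
    by (rule mult_left_mono[OF Suc mnorm2_nonneg])
  finally show ?case by simp
qed

lemma norm_cdot_matpow_le:
  "cmod (cdot (Y *v (matpow S i *v d)) (Y *v (matpow S i *v c)))
     \<le> norm d * mnorm2 (adjm Y ** Y) * norm c * (mnorm2 S ^ i)^2"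
proof -
  have "cdot (Y *v (matpow S i *v d)) (Y *v (matpow S i *v c))
      = cdot (matpow S i *v d) ((adjm Y ** Y) *v (matpow S i *v c))"
    by (simp add: cdot_adjm_right[symmetric] matrix_vector_mul_assoc[symmetric])
  also have "cmod \<dots> \<le> norm (matpow S i *v d) * norm ((adjm Y ** Y) *v (matpow S i *v c))"
    by (rule norm_cdot_le)
  also have "\<dots> \<le> (mnorm2 S ^ i * norm d) * (mnorm2 (adjm Y ** Y) * (mnorm2 S ^ i * norm c))"
    by (intro mult_mono norm_matpow_mult_vec_le order_trans[OF norm_mult_vec_le_mnorm2]
        mult_left_mono mnorm2_nonneg) (auto intro!: mult_nonneg_nonneg mnorm2_nonneg zero_le_power)
  finally show ?thesis by (simp add: power2_eq_square mult_ac)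
qed

lemma power_div_fact_le_exp:
  assumes "0 \<le> (s::real)"
  shows "s ^ k / fact k \<le> exp s"
proof -
  have "(\<Sum>i\<in>{k}. s ^ i /\<^sub>R fact i) \<le> (\<Sum>i. s ^ i /\<^sub>R fact i)"
    by (rule sum_le_suminf[OF summable_exp_generic]) (use assms in auto)
  then show ?thesis by (simp add: exp_def divide_inverse mult.commute)
qed

lemma exp_real_sums: "(\<lambda>k. (s::real) ^ k / fact k) sums exp s"
  using exp_converges[of s] by (simp add: divide_inverse mult.commute)

lemma
  assumes "0 \<le> (s::real)"
  shows summable_power_div_fact_squared: "summable (\<lambda>k. (s ^ k / fact k)^2)"
    and suminf_power_div_fact_squared_le: "(\<Sum>k. (s ^ k / fact k)^2) \<le> exp (2 * s)"
proof -
  have le: "(s ^ k / fact k)^2 \<le> exp s * (s ^ k / fact k)" for k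
    unfolding power2_eq_square using assms
    by (intro mult_right_mono power_div_fact_le_exp) auto
  have dom: "summable (\<lambda>k. exp s * (s ^ k / fact k))"
    by (rule summable_mult[OF sums_summable[OF exp_real_sums]])
  show sq: "summable (\<lambda>k. (s ^ k / fact k)^2)"
    by (rule summable_comparison_test'[OF dom]) (use le in auto)
  have "(\<Sum>k. (s ^ k / fact k)^2) \<le> (\<Sum>k. exp s * (s ^ k / fact k))"
    by (rule suminf_le[OF le sq dom])
  also have "\<dots> = exp s * exp s"
    by (rule sums_unique[symmetric], rule sums_mult[OF exp_real_sums])
  finally show "(\<Sum>k. (s ^ k / fact k)^2) \<le> exp (2 * s)"
    by (simp add: exp_add[symmetric])
qed

lemma fact_mult_fact_le_fact_add: "fact k * fact m \<le> (fact (k + m) :: real)"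
proof -
  have "fact k * fact m \<le> (fact (k + m) :: nat)"
    by (rule dvd_imp_le[OF fact_fact_dvd_fact]) simp
  then show ?thesis by (metis of_nat_fact of_nat_le_iff of_nat_mult)
qed

lemma suminf_power_div_fact_squared_tail_le:
  assumes s: "0 \<le> (s::real)"
  shows "(\<Sum>k. (s ^ (k + m) / fact (k + m))^2) \<le> (s ^ m / fact m)^2 * exp (2 * s)"
proof -
  have le: "(s ^ (k + m) / fact (k + m))^2 \<le> (s ^ m / fact m)^2 * (s ^ k / fact k)^2" for k
  proof -
    have "s ^ (k + m) / fact (k + m) \<le> s ^ (k + m) / (fact k * fact m)"
      using s fact_mult_fact_le_fact_add[of k m] by (intro divide_left_mono) auto
    then have "(s ^ (k + m) / fact (k + m))^2 \<le> (s ^ (k + m) / (fact k * fact m))^2"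
      using s by (intro power_mono) auto
    then show ?thesis by (simp add: power_add power_mult_distrib power_divide mult_ac)
  qed
  have sq: "summable (\<lambda>k. (s ^ k / fact k)^2)" by (rule summable_power_div_fact_squared[OF s])
  have "(\<Sum>k. (s ^ (k + m) / fact (k + m))^2) \<le> (\<Sum>k. (s ^ m / fact m)^2 * (s ^ k / fact k)^2)"
    by (rule suminf_le[OF le summable_ignore_initial_segment[OF sq] summable_mult[OF sq]])
  also have "\<dots> = (s ^ m / fact m)^2 * (\<Sum>k. (s ^ k / fact k)^2)"
    by (rule suminf_mult[OF sq])
  also have "\<dots> \<le> (s ^ m / fact m)^2 * exp (2 * s)"
    by (rule mult_left_mono[OF suminf_power_div_fact_squared_le[OF s]]) simp
  finally show ?thesis .
qed

definition gram_term :: "complex^'p^'n \<Rightarrow> complex^'p^'p \<Rightarrow> nat \<Rightarrow> complex^'p^'p" where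
  "gram_term Y S i = (1 / (fact i)^2) *\<^sub>R (adjm (matpow S i) ** adjm Y ** Y ** matpow S i)"

lemma Wmat_eq_sum_gram_term: "Wmat Y S N M = (\<Sum>i=N..M. gram_term Y S i)"
  unfolding Wmat_def gram_term_def ..

lemma cdot_struct_coeff_high_eq:
  assumes "N < i"
  shows "cdot (struct_coeff Y S d z N i) (struct_coeff Y S c x N i)
      = of_real (1 / (fact i)^2) * cdot (Y *v (matpow S i *v d)) (Y *v (matpow S i *v c))"
  using assms by (simp add: struct_coeff_def cdot_scaleR_left cdot_scaleR_right power2_eq_square)

lemma cdot_struct_coeff_high:
  assumes "N < i"
  shows "cdot (struct_coeff Y S d z N i) (struct_coeff Y S c x N i) = cdot d (gram_term Y S i *v c)"
proof -
  have "cdot (struct_coeff Y S d z N i) (struct_coeff Y S c x N i)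
      = of_real (1 / (fact i)^2) * cdot (Y *v (matpow S i *v d)) (Y *v (matpow S i *v c))"
    by (rule cdot_struct_coeff_high_eq[OF assms])
  also have "\<dots> = cdot d (gram_term Y S i *v c)"
    by (simp only: gram_term_def matrix_vector_mult_scaleR_left cdot_scaleR_right
        cdot_mult_vec_mult_vec)
  finally show ?thesis .
qed

lemma norm_cdot_struct_coeff_high_le:
  assumes "N < i"
  shows "cmod (cdot (struct_coeff Y S d z N i) (struct_coeff Y S c x N i))
     \<le> norm d * mnorm2 (adjm Y ** Y) * norm c * (mnorm2 S ^ i / fact i)^2"
proof -
  have "cmod (cdot (struct_coeff Y S d z N i) (struct_coeff Y S c x N i))
      = cmod (cdot (Y *v (matpow S i *v d)) (Y *v (matpow S i *v c))) / (fact i)^2"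
    by (simp add: cdot_struct_coeff_high_eq[OF assms] norm_mult norm_divide norm_power)
  also have "\<dots> \<le> norm d * mnorm2 (adjm Y ** Y) * norm c * (mnorm2 S ^ i)^2 / (fact i)^2"
    by (rule divide_right_mono[OF norm_cdot_matpow_le]) simp
  finally show ?thesis by (simp add: power_divide)
qed

lemma cdot_Wmat: "cdot d (Wmat Y S M M' *v c) = (\<Sum>i=M..M'. cdot d (gram_term Y S i *v c))"
  by (simp add: Wmat_eq_sum_gram_term matrix_vector_mult_sum_left cdot_sum_right)

lemma suminf_split_at_two_indices:
  fixes a :: "nat \<Rightarrow> 'a::real_normed_vector"
  assumes "summable a" and "N \<le> M"
  shows "suminf a = (\<Sum>i\<le>N. a i) + (\<Sum>i=Suc N..M. a i) + (\<Sum>k. a (k + (M + 1)))"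
proof -
  have "(\<Sum>i<Suc M. a i) = (\<Sum>i\<le>N + (M - N). a i)"
    using assms(2) by (simp add: lessThan_Suc_atMost)
  also have "\<dots> = (\<Sum>i\<le>N. a i) + (\<Sum>i=Suc N..M. a i)"
    using assms(2) by (simp only: sum_up_index_split) simp
  finally show ?thesis
    using suminf_split_initial_segment[OF assms(1), of "M + 1"] by (simp add: add_ac)
qed

lemma summable_norm_cdot_struct_coeff:
  "summable (\<lambda>i. cmod (cdot (struct_coeff Y S d z N i) (struct_coeff Y S c x N i)))"
proof (rule summable_comparison_test')
  show "summable (\<lambda>i. norm d * mnorm2 (adjm Y ** Y) * norm c * (mnorm2 S ^ i / fact i)^2)"
    by (rule summable_mult[OF summable_power_div_fact_squared[OF mnorm2_nonneg]])
  show "norm (cmod (cdot (struct_coeff Y S d z N i) (struct_coeff Y S c x N i)))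
      \<le> norm d * mnorm2 (adjm Y ** Y) * norm c * (mnorm2 S ^ i / fact i)^2" if "Suc N \<le> i" for i
    using norm_cdot_struct_coeff_high_le[of N i] that by simp
qed

lemma norm_suminf_cdot_struct_coeff_tail_le:
  assumes "N < m"
  shows "cmod (\<Sum>k. cdot (struct_coeff Y S d z N (k + m)) (struct_coeff Y S c x N (k + m)))
     \<le> norm d * mnorm2 (adjm Y ** Y) * norm c
          * (exp (2 * mnorm2 S) * mnorm2 S ^ (2 * m) / (fact m)^2)"
proof -
  define K where "K = norm d * mnorm2 (adjm Y ** Y) * norm c"
  define s where "s = mnorm2 S"
  have s: "0 \<le> s" unfolding s_def by (rule mnorm2_nonneg)
  have K: "0 \<le> K" unfolding K_def by (intro mult_nonneg_nonneg mnorm2_nonneg norm_ge_zero)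
  have tail: "summable (\<lambda>k. cmod (cdot (struct_coeff Y S d z N (k + m)) (struct_coeff Y S c x N (k + m))))"
    by (rule summable_ignore_initial_segment[OF summable_norm_cdot_struct_coeff])
  have sq: "summable (\<lambda>k. (s ^ (k + m) / fact (k + m))^2)"
    by (rule summable_ignore_initial_segment[OF summable_power_div_fact_squared[OF s]])
  have "cmod (\<Sum>k. cdot (struct_coeff Y S d z N (k + m)) (struct_coeff Y S c x N (k + m)))
      \<le> (\<Sum>k. cmod (cdot (struct_coeff Y S d z N (k + m)) (struct_coeff Y S c x N (k + m))))"
    by (rule summable_norm[OF tail])
  also have "\<dots> \<le> (\<Sum>k. K * (s ^ (k + m) / fact (k + m))^2)"
    using assms unfolding K_def s_def
    by (intro suminf_le[OF _ tail summable_mult[OF sq[unfolded s_def]]] norm_cdot_struct_coeff_high_le) simp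
  also have "\<dots> = K * (\<Sum>k. (s ^ (k + m) / fact (k + m))^2)"
    by (rule suminf_mult[OF sq])
  also have "\<dots> \<le> K * ((s ^ m / fact m)^2 * exp (2 * s))"
    by (rule mult_left_mono[OF suminf_power_div_fact_squared_tail_le[OF s] K])
  also have "\<dots> = K * (exp (2 * s) * s ^ (2 * m) / (fact m)^2)"
    by (simp add: power_divide power_mult mult.commute[of 2])
  finally show ?thesis unfolding K_def s_def .
qed

theorem mainTheorem3:
  fixes Y :: "complex^'p^'n" and S :: "complex^'p^'p"
    and c d :: "complex^'p" and x z :: "nat \<Rightarrow> complex^'n"
    and N Nmax :: nat
  assumes "Nmax \<ge> N + 1"
  shows "\<exists>\<epsilon>::complex.
     taylor_inner (struct_coeff Y S c x N) (struct_coeff Y S d z N)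
       = (\<Sum>i\<le>N. cdot (z i) (x i)) + cdot d (Wmat Y S (N + 1) Nmax *v c) + \<epsilon>
     \<and> cmod \<epsilon> \<le> norm d * mnorm2 (adjm Y ** Y) * norm c
          * (exp (2 * mnorm2 S) * mnorm2 S ^ (2 * (Nmax + 1)) / (fact (Nmax + 1))^2)"
proof -
  let ?a = "\<lambda>i. cdot (struct_coeff Y S d z N i) (struct_coeff Y S c x N i)"
  define \<epsilon> where "\<epsilon> = (\<Sum>k. ?a (k + (Nmax + 1)))"
  have "taylor_inner (struct_coeff Y S c x N) (struct_coeff Y S d z N) = suminf ?a"
    unfolding taylor_inner_def ..
  also have "\<dots> = (\<Sum>i\<le>N. ?a i) + (\<Sum>i=Suc N..Nmax. ?a i) + \<epsilon>"
    unfolding \<epsilon>_def using assms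
    by (intro suminf_split_at_two_indices summable_norm_cancel[OF summable_norm_cdot_struct_coeff]) simp
  also have "(\<Sum>i\<le>N. ?a i) = (\<Sum>i\<le>N. cdot (z i) (x i))"
    by (rule sum.cong) (auto simp: struct_coeff_def)
  also have "(\<Sum>i=Suc N..Nmax. ?a i) = cdot d (Wmat Y S (N + 1) Nmax *v c)"
    unfolding cdot_Wmat by (rule sum.cong) (auto simp: cdot_struct_coeff_high)
  finally have "taylor_inner (struct_coeff Y S c x N) (struct_coeff Y S d z N)
      = (\<Sum>i\<le>N. cdot (z i) (x i)) + cdot d (Wmat Y S (N + 1) Nmax *v c) + \<epsilon>" .
  moreover have "cmod \<epsilon> \<le> norm d * mnorm2 (adjm Y ** Y) * norm c
      * (exp (2 * mnorm2 S) * mnorm2 S ^ (2 * (Nmax + 1)) / (fact (Nmax + 1))^2)"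
    unfolding \<epsilon>_def by (rule norm_suminf_cdot_struct_coeff_tail_le) (use assms in simp)
  ultimately show ?thesis by blast
qed

end
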